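(* Let $(X,T),(Y,S)$ be $1$-step shifts of finite type over a finite alphabet $\mathcal{A}$, let $F:\mathcal{A}^2\to\mathbb{R}$ and $f(x,y)=F(x(0),y(0))$, and suppose $(X,T)$ is transitive. Then there is a constant $D_X\in\mathbb{N}$, depending on $(X,T)$ but not on $f$, such that for all integers $a\le b$, all $(v_1,v_2)\in P_{a,b}$ and all $y_0\in Y$, $$\min_{x\in X}\mathbb{S}_{[a,b]}f(x,y_0)\le H_{a,b,v_1,v_2}(y_0)\le\Big[\min_{x\in X}\mathbb{S}_{[a,b]}f(x,y_0)\Big]+4D_X\|f\|,$$ where $\|f\|$ is the supremum norm.
   Context: $\mathcal{A}^{\mathbb{Z}}$ carries the product of discrete topologies and the left shift $(Tx)(j)=x(j+1)$. A shift is a nonempty compact $X\subseteq\mathcal{A}^{\mathbb{Z}}$ with $TX=X$; it is a $1$-step shift of finite type if there is $\mathcal{F}\subseteq\mathcal{A}^{\{0,1\}}$ with $X=\{x:(T^jx)|_{[0,1]}\notin\mathcal{F}\ \forall j\}$. A shift $X$ is transitive if there is $D\in\mathbb{N}$ such that for all $x_1,x_2\in X$ and integers $b_1,a_2$ with $a_2-b_1\ge D$ there is $x'\in X$ with $x'(j)=x_1(j)$ for $j\le b_1$ and $x'(j)=x_2(j)$ for $j\ge a_2$. $\mathbb{S}_{[a,b]}f(x,y)=\sum_{j=a}^bf(T^jx,S^jy)$. $P_{a,b}=\{(v_1,v_2)\in\mathcal{A}^2:\exists x\in X,x(a)=v_1,x(b)=v_2\}$ and $H_{a,b,v_1,v_2}(y)=\min\{\mathbb{S}_{[a,b]}f(x,y):x\in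 X,x(a)=v_1,x(b)=v_2\}$. *)

theory Defs
  imports "HOL-Analysis.Analysis"
begin

definition shiftT :: "(int \<Rightarrow> 'a) \<Rightarrow> (int \<Rightarrow> 'a)" where
  "shiftT x = (\<lambda>j. x (j + 1))"

definition shift_pow :: "int \<Rightarrow> (int \<Rightarrow> 'a) \<Rightarrow> (int \<Rightarrow> 'a)" where
  "shift_pow n x = (\<lambda>j. x (j + n))"

definition full_shift_topology :: "(int \<Rightarrow> 'a) topology" where
  "full_shift_topology = product_topology (\<lambda>_. discrete_topology UNIV) UNIV"

definition is_shift :: "(int \<Rightarrow> 'a::finite) set \<Rightarrow> bool" where
  "is_shift X \<longleftrightarrow> X \<noteq> {} \<and> compactin full_shift_topology X \<and> shiftT ` X = X"

text \<open>1-step shift of finite type: forbidden words of length 2 (elements of A^{0,1}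
  encoded as pairs (w(0), w(1))).\<close>
definition is_1step_sft :: "(int \<Rightarrow> 'a::finite) set \<Rightarrow> bool" where
  "is_1step_sft X \<longleftrightarrow> is_shift X \<and>
     (\<exists>Fb :: ('a \<times> 'a) set. X = {x. \<forall>j. (x j, x (j + 1)) \<notin> Fb})"

definition transitive_shift :: "(int \<Rightarrow> 'a::finite) set \<Rightarrow> bool" where
  "transitive_shift X \<longleftrightarrow> (\<exists>D::nat. \<forall>x1\<in>X. \<forall>x2\<in>X. \<forall>b1 a2 :: int. a2 - b1 \<ge> int D \<longrightarrow>
     (\<exists>x'\<in>X. (\<forall>j\<le>b1. x' j = x1 j) \<and> (\<forall>j\<ge>a2. x' j = x2 j)))"

definition birkhoff_sum ::
  "((int \<Rightarrow> 'a) \<Rightarrow> (int \<Rightarrow> 'b) \<Rightarrow> real) \<Rightarrow> int \<Rightarrow> int \<Rightarrow> (int \<Rightarrow> 'a) \<Rightarrow> (int \<Rightarrow> 'b) \<Rightarrow> real" where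
  "birkhoff_sum f a b x y = (\<Sum>j\<in>{a..b}. f (shift_pow j x) (shift_pow j y))"

definition Pset :: "(int \<Rightarrow> 'a) set \<Rightarrow> int \<Rightarrow> int \<Rightarrow> ('a \<times> 'a) set" where
  "Pset X a b = {(v1, v2). \<exists>x\<in>X. x a = v1 \<and> x b = v2}"

definition Hfun ::
  "(int \<Rightarrow> 'a) set \<Rightarrow> ((int \<Rightarrow> 'a) \<Rightarrow> (int \<Rightarrow> 'b) \<Rightarrow> real) \<Rightarrow> int \<Rightarrow> int \<Rightarrow> 'a \<Rightarrow> 'a \<Rightarrow> (int \<Rightarrow> 'b) \<Rightarrow> real" where
  "Hfun X f a b v1 v2 y = Min ((\<lambda>x. birkhoff_sum f a b x y) ` {x\<in>X. x a = v1 \<and> x b = v2})"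

definition sup_norm ::
  "(int \<Rightarrow> 'a) set \<Rightarrow> (int \<Rightarrow> 'b) set \<Rightarrow> ((int \<Rightarrow> 'a) \<Rightarrow> (int \<Rightarrow> 'b) \<Rightarrow> real) \<Rightarrow> real" where
  "sup_norm X Y f = (SUP p\<in>X \<times> Y. \<bar>f (fst p) (snd p)\<bar>)"

end

theory Submission
  imports Defs
begin

text \<open>Let \<open>x\<^sub>*\<close> minimise the Birkhoff sum over all of \<open>X\<close>, and let \<open>z \<in> X\<close> realise the
  boundary symbols \<open>(v\<^sub>1, v\<^sub>2)\<close>. Transitivity with gap \<open>D\<close> glues \<open>z\<close> on \<open>(-\<infinity>, a]\<close>, \<open>x\<^sub>*\<close> on
  \<open>[a + D, b - D]\<close> and \<open>z\<close> on \<open>[b, \<infinity>)\<close> into a single point \<open>w \<in> X\<close> with the prescribed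
  boundary symbols. Since \<open>w\<close> differs from \<open>x\<^sub>*\<close> at no more than \<open>2D\<close> sites of \<open>[a, b]\<close>, each
  costing at most \<open>2\<parallel>f\<parallel>\<close>, its sum exceeds the global minimum by at most \<open>4D\<parallel>f\<parallel>\<close>.\<close>

definition gluing_gap :: "(int \<Rightarrow> 'a) set \<Rightarrow> nat \<Rightarrow> bool" where
  "gluing_gap X D \<longleftrightarrow> (\<forall>u\<in>X. \<forall>v\<in>X. \<forall>s t :: int. t - s \<ge> int D \<longrightarrow>
     (\<exists>w\<in>X. (\<forall>j\<le>s. w j = u j) \<and> (\<forall>j\<ge>t. w j = v j)))"

lemma transitive_shift_iff_gluing_gap: "transitive_shift X \<longleftrightarrow> (\<exists>D. gluing_gap X D)"
  unfolding transitive_shift_def gluing_gap_def by blast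

lemma gluing_gapE:
  assumes "gluing_gap X D" "u \<in> X" "v \<in> X" "t - s \<ge> int D"
  obtains w where "w \<in> X" "\<And>j. j \<le> s \<Longrightarrow> w j = u j" "\<And>j. j \<ge> t \<Longrightarrow> w j = v j"
  using assms unfolding gluing_gap_def by blast

lemma gluing_gap_replace_middle:
  assumes "gluing_gap X D" "z \<in> X" "u \<in> X"
  obtains w where "w \<in> X" "w a = z a" "w b = z b"
    "\<And>j. a + int D \<le> j \<Longrightarrow> j \<le> b - int D \<Longrightarrow> w j = u j"
proof (cases "a + int D \<le> b - int D")
  case True
  obtain x1 where x1: "x1 \<in> X" "\<And>j. j \<le> a \<Longrightarrow> x1 j = z j" "\<And>j. j \<ge> a + int D \<Longrightarrow> x1 j = u j"
    by (rule gluing_gapE[OF assms, where s = a and t = "a + int D"]) auto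
  obtain x2 where x2: "x2 \<in> X" "\<And>j. j \<le> b - int D \<Longrightarrow> x2 j = x1 j" "\<And>j. j \<ge> b \<Longrightarrow> x2 j = z j"
    by (rule gluing_gapE[OF assms(1) x1(1) assms(2), where s = "b - int D" and t = b]) auto
  show ?thesis
  proof (rule that[of x2])
    show "x2 a = z a"
      using True by (simp add: x1(2) x2(2))
  qed (auto simp: x1 x2)
next
  case False
  then show ?thesis
    using that[of z] assms(2) by simp
qed

lemma sum_le_sum_agree_off_ends:
  fixes g h :: "int \<Rightarrow> real"
  assumes "\<And>j. \<bar>g j\<bar> \<le> M" "\<And>j. \<bar>h j\<bar> \<le> M"
    and agree: "\<And>j. a + int D \<le> j \<Longrightarrow> j \<le> b - int D \<Longrightarrow> g j = h j"
  shows "sum g {a..b} \<le> sum h {a..b} + 4 * real D * M"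
proof -
  define E where "E = {a..b} - {a + int D..b - int D}"
  have M_nonneg: "0 \<le> M"
    using assms(1)[of 0] by linarith
  have "card E \<le> card ({a..<a + int D} \<union> {b - int D<..b})"
    unfolding E_def by (intro card_mono) auto
  also have "\<dots> \<le> 2 * D"
    using card_Un_le[of "{a..<a + int D}" "{b - int D<..b}"] by simp
  finally have card_E: "card E \<le> 2 * D" .
  have "sum g {a..b} - sum h {a..b} = (\<Sum>j\<in>E. g j - h j)"
    unfolding sum_subtractf[symmetric] E_def
    by (intro sum.mono_neutral_right) (auto simp: agree)
  also have "\<dots> \<le> real (card E) * (2 * M)"
  proof (rule sum_bounded_above)
    fix j
    show "g j - h j \<le> 2 * M"
      using assms(1,2)[of j] unfolding abs_le_iff by linarith
  qed
  also have "\<dots> \<le> real (2 * D) * (2 * M)"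
    using card_E M_nonneg by (intro mult_right_mono) auto
  finally show ?thesis by simp
qed

lemma is_1step_sft_shift_pow:
  assumes "is_1step_sft X" "x \<in> X"
  shows "shift_pow n x \<in> X"
proof -
  obtain Fb where Fb: "X = {x. \<forall>j. (x j, x (j + 1)) \<notin> Fb}"
    using assms(1) unfolding is_1step_sft_def by blast
  have "(x (j + n), x (j + 1 + n)) \<notin> Fb" for j
    using assms(2) Fb by (auto simp: add.commute add.left_commute)
  then show ?thesis
    using Fb unfolding shift_pow_def by simp
qed

lemma birkhoff_sum_single_site:
  "birkhoff_sum (\<lambda>x y. F (x 0) (y 0)) a b x y = (\<Sum>j\<in>{a..b}. F (x j) (y j))"
  unfolding birkhoff_sum_def shift_pow_def by simp

lemma single_site_le_sup_norm:
  fixes F :: "'a::finite \<Rightarrow> 'b::finite \<Rightarrow> real"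
  assumes "is_1step_sft X" "is_1step_sft Y" "x \<in> X" "y \<in> Y"
  shows "\<bar>F (x j) (y j)\<bar> \<le> sup_norm X Y (\<lambda>x y. F (x 0) (y 0))"
proof -
  have fin: "finite ((\<lambda>p. \<bar>F (fst p 0) (snd p 0)\<bar>) ` (X \<times> Y))"
    by (rule finite_subset[of _ "range (\<lambda>(u, v). \<bar>F u v\<bar>)"]) auto
  have mem: "(shift_pow j x, shift_pow j y) \<in> X \<times> Y"
    using assms by (simp add: is_1step_sft_shift_pow)
  have "\<bar>F (x j) (y j)\<bar> = (\<lambda>p. \<bar>F (fst p 0) (snd p 0)\<bar>) (shift_pow j x, shift_pow j y)"
    by (simp add: shift_pow_def)
  also have "\<dots> \<le> (SUP p\<in>X \<times> Y. \<bar>F (fst p 0) (snd p 0)\<bar>)"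
    by (rule cSUP_upper[OF mem bdd_above_finite[OF fin]])
  finally show ?thesis
    by (simp add: sup_norm_def)
qed

lemma finite_image_site_sums:
  fixes F :: "'a::finite \<Rightarrow> 'b \<Rightarrow> real" and a b :: int
  shows "finite ((\<lambda>x. \<Sum>j\<in>{a..b}. F (x j) (y j)) ` A)"
proof (rule finite_subset)
  show "(\<lambda>x. \<Sum>j\<in>{a..b}. F (x j) (y j)) ` A \<subseteq>
        (\<lambda>g. \<Sum>j\<in>{a..b}. F (g j) (y j)) ` ({a..b} \<rightarrow>\<^sub>E UNIV)"
  proof (rule image_subsetI)
    fix x
    show "(\<Sum>j\<in>{a..b}. F (x j) (y j)) \<in> (\<lambda>g. \<Sum>j\<in>{a..b}. F (g j) (y j)) ` ({a..b} \<rightarrow>\<^sub>E UNIV)"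
      by (rule rev_image_eqI[of "restrict x {a..b}"]) simp_all
  qed
  show "finite ((\<lambda>g. \<Sum>j\<in>{a..b}. F (g j) (y j)) ` ({a..b} \<rightarrow>\<^sub>E (UNIV :: 'a set)))"
    by (intro finite_imageI finite_PiE) simp_all
qed

lemma Min_birkhoff_sum_le_Hfun:
  fixes F :: "'a::finite \<Rightarrow> 'b \<Rightarrow> real"
  assumes "(v1, v2) \<in> Pset X a b"
  defines "f \<equiv> \<lambda>x y. F (x 0) (y 0)"
  shows "Min ((\<lambda>x. birkhoff_sum f a b x y) ` X) \<le> Hfun X f a b v1 v2 y"
  using assms unfolding Hfun_def f_def birkhoff_sum_single_site Pset_def
  by (intro Min_antimono) (auto simp: finite_image_site_sums)

lemma Hfun_le_Min_birkhoff_sum: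
  fixes F :: "'a::finite \<Rightarrow> 'a \<Rightarrow> real"
  assumes X: "is_1step_sft X" "gluing_gap X D" and Y: "is_1step_sft Y" "y \<in> Y"
    and "(v1, v2) \<in> Pset X a b"
  defines "f \<equiv> \<lambda>x y. F (x 0) (y 0)"
  shows "Hfun X f a b v1 v2 y \<le> Min ((\<lambda>x. birkhoff_sum f a b x y) ` X) + 4 * real D * sup_norm X Y f"
proof -
  let ?g = "\<lambda>x. \<Sum>j\<in>{a..b}. F (x j) (y j)"
  let ?S = "{x\<in>X. x a = v1 \<and> x b = v2}"
  obtain z where z: "z \<in> X" "z a = v1" "z b = v2"
    using assms(5) unfolding Pset_def by auto
  have "Min (?g ` X) \<in> ?g ` X"
    using z(1) by (intro Min_in finite_image_site_sums) auto
  then obtain x_min where x_min: "x_min \<in> X" "?g x_min = Min (?g ` X)"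
    by auto
  obtain w where w: "w \<in> X" "w a = v1" "w b = v2"
    and agree: "\<And>j. a + int D \<le> j \<Longrightarrow> j \<le> b - int D \<Longrightarrow> w j = x_min j"
    using gluing_gap_replace_middle[OF X(2) z(1) x_min(1)] z by metis
  have "Min (?g ` ?S) \<le> ?g w"
    using w by (intro Min_le finite_image_site_sums) auto
  also have "\<dots> \<le> ?g x_min + 4 * real D * sup_norm X Y f"
    unfolding f_def
    by (intro sum_le_sum_agree_off_ends single_site_le_sup_norm X(1) Y w(1) x_min(1))
      (simp add: agree)
  finally show ?thesis
    unfolding Hfun_def f_def birkhoff_sum_single_site x_min(2) .
qed

theorem lemma3p8:
  fixes X :: "(int \<Rightarrow> 'a::finite) set"
  assumes "is_1step_sft X" and "transitive_shift X"
  shows "\<exists>D::nat. \<forall>(Y :: (int \<Rightarrow> 'a) set) (F :: 'a \<Rightarrow> 'a \<Rightarrow> real).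
    is_1step_sft Y \<longrightarrow>
    (let f = (\<lambda>x y. F (x 0) (y 0)) in
     \<forall>a b :: int. a \<le> b \<longrightarrow> (\<forall>(v1, v2)\<in>Pset X a b. \<forall>y0\<in>Y.
       Min ((\<lambda>x. birkhoff_sum f a b x y0) ` X) \<le> Hfun X f a b v1 v2 y0 \<and>
       Hfun X f a b v1 v2 y0 \<le> Min ((\<lambda>x. birkhoff_sum f a b x y0) ` X) + 4 * real D * sup_norm X Y f))"
proof -
  obtain D where D: "gluing_gap X D"
    using assms(2) transitive_shift_iff_gluing_gap by blast
  show ?thesis
    unfolding Let_def
    using Min_birkhoff_sum_le_Hfun Hfun_le_Min_birkhoff_sum[OF assms(1) D]
    by (intro exI[of _ D] allI impI ballI) auto
qed

end
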